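(* Let $S$ be a Phillips symmetric operator in a separable Hilbert space and let $A$ be a proper extension of $S$ (i.e. $S\subset A\subset S^*$). Then the spectrum $\sigma(A)$ is one of the following sets: (i) $\mathbb R$; (ii) $\mathbb C_-\cup\mathbb R$ or $\mathbb R\cup\mathbb C_+$; (iii) $\mathbb C$.
   Context: A closed densely defined symmetric operator $S$ with equal nonzero defect numbers is a Phillips symmetric operator (PSO) if its characteristic function is constant on $\mathbb C_+$; here, given a boundary triplet $(\mathcal H,\Gamma_-,\Gamma_+)$ of $S^*$ (i.e. $\Gamma_\pm:\mathcal D(S^* )\to\mathcal H$ linear, $(S^*f,g)-(f,S^*g)=i[(\Gamma_+f,\Gamma_+g)-(\Gamma_-f,\Gamma_-g)]$, $(\Gamma_-,\Gamma_+)$ surjective onto $\mathcal H\oplus\mathcal H$), the characteristic function $\Theta(\lambda)$, $\lambda\in\mathbb C_+$, is the bounded operator in $\mathcal H$ with $\mathcal D(S)\dotplus\ker(S^*-\lambda I)=\{f\in\mathcal D(S^* ):\Theta(\lambda)\Gamma_+f=\Gamma_-f\}$. *)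

theory Defs
  imports "HOL-Analysis.Analysis" "HOL-Library.Equipollence"
begin

text \<open>Complex pre-Hilbert structure on a type with addition: scalar multiplication and an
inner product (linear in the first argument, conjugate-linear in the second).\<close>

record 'a cip =
  smul :: "complex \<Rightarrow> 'a \<Rightarrow> 'a"
  inner :: "'a \<Rightarrow> 'a \<Rightarrow> complex"

definition cnorm :: "('a, 'b) cip_scheme \<Rightarrow> 'a \<Rightarrow> real" where
  "cnorm V x = sqrt (Re (inner V x x))"

definition hilbert_space :: "('a::ab_group_add) cip \<Rightarrow> bool" where
  "hilbert_space V \<longleftrightarrow>
     (\<forall>a x y. smul V a (x + y) = smul V a x + smul V a y) \<and>
     (\<forall>a b x. smul V (a + b) x = smul V a x + smul V b x) \<and>
     (\<forall>a b x. smul V a (smul V b x) = smul V (a * b) x) \<and>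
     (\<forall>x. smul V 1 x = x) \<and>
     (\<forall>x y z. inner V (x + y) z = inner V x z + inner V y z) \<and>
     (\<forall>a x y. inner V (smul V a x) y = a * inner V x y) \<and>
     (\<forall>x y. inner V y x = cnj (inner V x y)) \<and>
     (\<forall>x. Im (inner V x x) = 0 \<and> Re (inner V x x) \<ge> 0) \<and>
     (\<forall>x. inner V x x = 0 \<longrightarrow> x = 0) \<and>
     (\<forall>X :: nat \<Rightarrow> 'a. (\<forall>e>0. \<exists>N. \<forall>m\<ge>N. \<forall>n\<ge>N. cnorm V (X m - X n) < e)
        \<longrightarrow> (\<exists>L. (\<lambda>n. cnorm V (X n - L)) \<longlonglongrightarrow> 0))"

definition separable_space :: "('a::ab_group_add) cip \<Rightarrow> bool" where
  "separable_space V \<longleftrightarrow>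
     (\<exists>D. countable D \<and> (\<forall>x e. e > 0 \<longrightarrow> (\<exists>d\<in>D. cnorm V (x - d) < e)))"

text \<open>Linear operators are represented by their graphs.\<close>

definition graph_subspace :: "('a::ab_group_add) cip \<Rightarrow> ('a \<times> 'a) set \<Rightarrow> bool" where
  "graph_subspace V G \<longleftrightarrow> (0, 0) \<in> G \<and>
     (\<forall>x y u v. (x, y) \<in> G \<longrightarrow> (u, v) \<in> G \<longrightarrow> (x + u, y + v) \<in> G) \<and>
     (\<forall>a x y. (x, y) \<in> G \<longrightarrow> (smul V a x, smul V a y) \<in> G)"

definition is_operator :: "('a::ab_group_add) cip \<Rightarrow> ('a \<times> 'a) set \<Rightarrow> bool" where
  "is_operator V G \<longleftrightarrow> graph_subspace V G \<and> (\<forall>y. (0, y) \<in> G \<longrightarrow> y = 0)"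

definition dom :: "('a \<times> 'a) set \<Rightarrow> 'a set" where
  "dom G = fst ` G"

definition densely_defined :: "('a::ab_group_add) cip \<Rightarrow> ('a \<times> 'a) set \<Rightarrow> bool" where
  "densely_defined V G \<longleftrightarrow> (\<forall>x e. e > 0 \<longrightarrow> (\<exists>d\<in>dom G. cnorm V (x - d) < e))"

definition closed_operator :: "('a::ab_group_add) cip \<Rightarrow> ('a \<times> 'a) set \<Rightarrow> bool" where
  "closed_operator V G \<longleftrightarrow>
     (\<forall>(X :: nat \<Rightarrow> 'a) Y x y. (\<forall>n. (X n, Y n) \<in> G) \<longrightarrow>
        (\<lambda>n. cnorm V (X n - x)) \<longlonglongrightarrow> 0 \<longrightarrow> (\<lambda>n. cnorm V (Y n - y)) \<longlonglongrightarrow> 0 \<longrightarrow> (x, y) \<in> G)"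

definition adjoint :: "('a::ab_group_add) cip \<Rightarrow> ('a \<times> 'a) set \<Rightarrow> ('a \<times> 'a) set" where
  "adjoint V G = {(y, z). \<forall>(x, w) \<in> G. inner V w y = inner V x z}"

definition symmetric_operator :: "('a::ab_group_add) cip \<Rightarrow> ('a \<times> 'a) set \<Rightarrow> bool" where
  "symmetric_operator V S \<longleftrightarrow> is_operator V S \<and> densely_defined V S \<and> S \<subseteq> adjoint V S"

definition defect_space :: "('a::ab_group_add) cip \<Rightarrow> ('a \<times> 'a) set \<Rightarrow> complex \<Rightarrow> 'a set" where
  "defect_space V S l = {f. (f, smul V l f) \<in> adjoint V S}"

definition orthonormal_basis_of :: "('a::ab_group_add) cip \<Rightarrow> 'a set \<Rightarrow> 'a set \<Rightarrow> bool" where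
  "orthonormal_basis_of V N E \<longleftrightarrow> E \<subseteq> N \<and>
     (\<forall>e\<in>E. inner V e e = 1) \<and> (\<forall>e\<in>E. \<forall>e'\<in>E. e \<noteq> e' \<longrightarrow> inner V e e' = 0) \<and>
     (\<forall>x\<in>N. (\<forall>e\<in>E. inner V x e = 0) \<longrightarrow> x = 0)"

text \<open>Equal (Hilbert-dimension) defect numbers \<open>n_+ = dim ker(S* - i)\<close>, \<open>n_- = dim ker(S* + i)\<close>,
  both nonzero.\<close>

definition equal_nonzero_defects :: "('a::ab_group_add) cip \<Rightarrow> ('a \<times> 'a) set \<Rightarrow> bool" where
  "equal_nonzero_defects V S \<longleftrightarrow>
     (\<exists>Ep Em. orthonormal_basis_of V (defect_space V S \<i>) Ep \<and>
              orthonormal_basis_of V (defect_space V S (- \<i>)) Em \<and>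
              Ep \<approx> Em \<and> Ep \<noteq> {})"

definition boundary_triplet ::
  "('a::ab_group_add) cip \<Rightarrow> ('a \<times> 'a) set \<Rightarrow> ('k::ab_group_add) cip \<Rightarrow> ('a \<Rightarrow> 'k) \<Rightarrow> ('a \<Rightarrow> 'k) \<Rightarrow> bool" where
  "boundary_triplet V S K Gm Gp \<longleftrightarrow> hilbert_space K \<and>
     (\<forall>f\<in>dom (adjoint V S). \<forall>g\<in>dom (adjoint V S).
        Gm (f + g) = Gm f + Gm g \<and> Gp (f + g) = Gp f + Gp g) \<and>
     (\<forall>a. \<forall>f\<in>dom (adjoint V S). Gm (smul V a f) = smul K a (Gm f) \<and> Gp (smul V a f) = smul K a (Gp f)) \<and>
     (\<forall>f f' g g'. (f, f') \<in> adjoint V S \<longrightarrow> (g, g') \<in> adjoint V S \<longrightarrow>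
        inner V f' g - inner V f g' = \<i> * (inner K (Gp f) (Gp g) - inner K (Gm f) (Gm g))) \<and>
     (\<forall>a b. \<exists>f\<in>dom (adjoint V S). Gm f = a \<and> Gp f = b)"

definition bounded_op :: "('k::ab_group_add) cip \<Rightarrow> ('k \<Rightarrow> 'k) \<Rightarrow> bool" where
  "bounded_op K C \<longleftrightarrow> (\<forall>x y. C (x + y) = C x + C y) \<and> (\<forall>a x. C (smul K a x) = smul K a (C x)) \<and>
     (\<exists>M. \<forall>x. cnorm K (C x) \<le> M * cnorm K x)"

definition characteristic_function ::
  "('a::ab_group_add) cip \<Rightarrow> ('a \<times> 'a) set \<Rightarrow> ('k::ab_group_add) cip \<Rightarrow> ('a \<Rightarrow> 'k) \<Rightarrow> ('a \<Rightarrow> 'k)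
     \<Rightarrow> (complex \<Rightarrow> 'k \<Rightarrow> 'k) \<Rightarrow> bool" where
  "characteristic_function V S K Gm Gp Th \<longleftrightarrow>
     (\<forall>l. Im l > 0 \<longrightarrow> bounded_op K (Th l) \<and>
        {u + v | u v. u \<in> dom S \<and> v \<in> defect_space V S l} =
        {f \<in> dom (adjoint V S). Th l (Gp f) = Gm f})"

definition phillips_symmetric ::
  "'k::ab_group_add itself \<Rightarrow> ('a::ab_group_add) cip \<Rightarrow> ('a \<times> 'a) set \<Rightarrow> bool" where
  "phillips_symmetric (_ :: 'k itself) V S \<longleftrightarrow>
     symmetric_operator V S \<and> closed_operator V S \<and> equal_nonzero_defects V S \<and>
     (\<exists>(K :: 'k cip) Gm Gp Th C. boundary_triplet V S K Gm Gp \<and>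
        characteristic_function V S K Gm Gp Th \<and> (\<forall>l. Im l > 0 \<longrightarrow> Th l = C))"

text \<open>Spectrum: \<open>\<lambda>\<close> is in the resolvent set iff \<open>A - \<lambda>\<close> maps \<open>D(A)\<close> bijectively onto the
  whole space with bounded inverse.\<close>

definition resolvent_set :: "('a::ab_group_add) cip \<Rightarrow> ('a \<times> 'a) set \<Rightarrow> complex set" where
  "resolvent_set V A = {l. (\<forall>y. \<exists>!x. (x, y + smul V l x) \<in> A) \<and>
      (\<exists>M. \<forall>x y. (x, y + smul V l x) \<in> A \<longrightarrow> cnorm V x \<le> M * cnorm V y)}"

definition spectrum :: "('a::ab_group_add) cip \<Rightarrow> ('a \<times> 'a) set \<Rightarrow> complex set" where
  "spectrum V A = UNIV - resolvent_set V A"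

end

(*
  Let S be closed, densely defined and symmetric, and let S \<subseteq> A \<subseteq> S*.  For nonreal l, l' the
  resolvent set of A passes from l to l' as soon as ker (S* - l) \<subseteq> D(S) + ker (S* - l') and
  vice versa: S - l' has closed range with orthogonal complement ker (S* - cnj l'), so
  (S* - l') f = y is solvable, and the resolvent of A at l corrects f up to a D(S)-component.

  For a Phillips operator the boundary values of every ker (S* - l), Im l > 0, lie on the graph of
  the constant characteristic function C, so D(S) + ker (S* - l) does not depend on l in the upper
  half-plane.  Green's identity shows that ker (S* - \<mu>), Im \<mu> < 0, is orthogonal to
  ker (S* - l) for all l \<noteq> cnj \<mu> in the upper half-plane, which gives the same property in the
  lower half-plane.  Hence the resolvent set meets each
  open half-plane in nothing or in all of it.  Finally no real x is in the resolvent set: writing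
  f \<in> ker (S* - x - i\<epsilon>) as d + g with g \<in> ker (S* - x - 2i\<epsilon>), Green's identity gives
  \<parallel>(S - x) d\<parallel> = \<surd>2 \<epsilon> \<parallel>d\<parallel> with d \<noteq> 0, so x is in the approximate point spectrum of S \<subseteq> A.
*)

theory Submission
  imports Defs
begin

lemma mem_dom_iff: "x \<in> Defs.dom G \<longleftrightarrow> (\<exists>y. (x, y) \<in> G)"
  unfolding Defs.dom_def by force

section \<open>Complex inner product spaces\<close>

locale hilbert =
  fixes V :: "('a::ab_group_add) cip"
  assumes hilbert: "hilbert_space V"
begin

lemma smul_add_right: "smul V a (x + y) = smul V a x + smul V a y"
  using hilbert unfolding hilbert_space_def by metis

lemma smul_add_left: "smul V (a + b) x = smul V a x + smul V b x"
  using hilbert unfolding hilbert_space_def by metis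

lemma smul_smul: "smul V a (smul V b x) = smul V (a * b) x"
  using hilbert unfolding hilbert_space_def by metis

lemma smul_one: "smul V 1 x = x"
  using hilbert unfolding hilbert_space_def by metis

lemma inner_add_left: "inner V (x + y) z = inner V x z + inner V y z"
  using hilbert unfolding hilbert_space_def by metis

lemma inner_smul_left: "inner V (smul V a x) y = a * inner V x y"
  using hilbert unfolding hilbert_space_def by metis

lemma inner_commute: "inner V y x = cnj (inner V x y)"
  using hilbert unfolding hilbert_space_def by metis

lemma Im_inner_self: "Im (inner V x x) = 0"
  using hilbert unfolding hilbert_space_def by metis

lemma Re_inner_self_nonneg: "Re (inner V x x) \<ge> 0"
  using hilbert unfolding hilbert_space_def by metis

lemma inner_self_eq_zeroD: "inner V x x = 0 \<Longrightarrow> x = 0"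
  using hilbert unfolding hilbert_space_def by metis

lemma smul_zero_left [simp]: "smul V 0 x = 0"
  using smul_add_left[of 0 0 x] by simp

lemma smul_zero_right [simp]: "smul V a 0 = 0"
  using smul_add_right[of a 0 0] by simp

lemma smul_minus_left: "smul V (- a) x = - smul V a x"
  using smul_add_left[of "- a" a x] by (simp add: eq_neg_iff_add_eq_0)

lemma smul_minus_right: "smul V a (- x) = - smul V a x"
  using smul_add_right[of a "- x" x] by (simp add: eq_neg_iff_add_eq_0)

lemma smul_diff_right: "smul V a (x - y) = smul V a x - smul V a y"
  using smul_add_right[of a x "- y"] smul_minus_right by simp

lemma smul_diff_left: "smul V (a - b) x = smul V a x - smul V b x"
  using smul_add_left[of a "- b" x] smul_minus_left by simp

lemma smul_cancel: "smul V a x = 0 \<Longrightarrow> a \<noteq> 0 \<Longrightarrow> x = 0"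
  by (metis smul_one smul_smul smul_zero_right divide_self_if divide_inverse mult.commute)

lemma inner_zero_left [simp]: "inner V 0 y = 0"
  using inner_add_left[of 0 0 y] by simp

lemma inner_minus_left: "inner V (- x) y = - inner V x y"
  using inner_add_left[of "- x" x y] by (simp add: eq_neg_iff_add_eq_0)

lemma inner_diff_left: "inner V (x - y) z = inner V x z - inner V y z"
  using inner_add_left[of x "- y" z] inner_minus_left by simp

lemma inner_add_right: "inner V x (y + z) = inner V x y + inner V x z"
  by (metis inner_add_left inner_commute complex_cnj_add)

lemma inner_smul_right: "inner V x (smul V a y) = cnj a * inner V x y"
  by (metis inner_smul_left inner_commute complex_cnj_mult)

lemma inner_zero_right [simp]: "inner V x 0 = 0"
  by (metis inner_zero_left inner_commute complex_cnj_zero)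

lemma inner_minus_right: "inner V x (- y) = - inner V x y"
  by (metis inner_minus_left inner_commute complex_cnj_minus)

lemma inner_diff_right: "inner V x (y - z) = inner V x y - inner V x z"
  using inner_add_right[of x y "- z"] inner_minus_right by simp

definition sqnorm :: "'a \<Rightarrow> real" where
  "sqnorm x = Re (inner V x x)"

lemma inner_self: "inner V x x = complex_of_real (sqnorm x)"
  using Im_inner_self[of x] unfolding sqnorm_def by (simp add: complex_eq_iff)

lemma sqnorm_nonneg: "sqnorm x \<ge> 0"
  using Re_inner_self_nonneg unfolding sqnorm_def by simp

lemma sqnorm_eq_zero_iff: "sqnorm x = 0 \<longleftrightarrow> x = 0"
  using inner_self[of x] inner_self_eq_zeroD[of x] by (auto simp: sqnorm_def)

lemma Re_inner_commute: "Re (inner V y x) = Re (inner V x y)"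
  using inner_commute[of y x] by simp

lemma sqnorm_add: "sqnorm (x + y) = sqnorm x + sqnorm y + 2 * Re (inner V x y)"
  unfolding sqnorm_def by (simp add: inner_add_left inner_add_right Re_inner_commute[of y x])

lemma sqnorm_diff: "sqnorm (x - y) = sqnorm x + sqnorm y - 2 * Re (inner V x y)"
  unfolding sqnorm_def by (simp add: inner_diff_left inner_diff_right Re_inner_commute[of y x])

lemma sqnorm_smul: "sqnorm (smul V a x) = (cmod a)\<^sup>2 * sqnorm x"
proof -
  have "inner V (smul V a x) (smul V a x) = (a * cnj a) * inner V x x"
    by (simp add: inner_smul_left inner_smul_right)
  also have "a * cnj a = complex_of_real ((cmod a)\<^sup>2)"
    by (metis complex_norm_square)
  finally show ?thesis unfolding sqnorm_def by simp
qed

lemma sqnorm_minus: "sqnorm (- x) = sqnorm x"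
  unfolding sqnorm_def by (simp add: inner_minus_left inner_minus_right)

lemma parallelogram: "sqnorm (x - y) + sqnorm (x + y) = 2 * sqnorm x + 2 * sqnorm y"
  by (simp add: sqnorm_add sqnorm_diff)

lemma Cauchy_Schwarz_sq: "(cmod (inner V x y))\<^sup>2 \<le> sqnorm x * sqnorm y"
proof (cases "y = 0")
  case True
  then show ?thesis by (simp add: sqnorm_def)
next
  case False
  then have y: "sqnorm y > 0"
    using sqnorm_nonneg[of y] sqnorm_eq_zero_iff[of y] by linarith
  define t where "t = inner V x y / complex_of_real (sqnorm y)"
  have "0 \<le> sqnorm (x - smul V t y)" by (rule sqnorm_nonneg)
  also have "\<dots> = sqnorm x + (cmod t)\<^sup>2 * sqnorm y - 2 * Re (cnj t * inner V x y)"
    by (simp add: sqnorm_diff sqnorm_smul inner_smul_right)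
  also have "cnj t * inner V x y = complex_of_real ((cmod (inner V x y))\<^sup>2 / sqnorm y)"
    unfolding t_def by (simp add: complex_norm_square[symmetric] mult.commute)
  also have "(cmod t)\<^sup>2 * sqnorm y = (cmod (inner V x y))\<^sup>2 / sqnorm y"
    unfolding t_def using y by (simp add: norm_divide power2_eq_square)
  finally have "(cmod (inner V x y))\<^sup>2 / sqnorm y \<le> sqnorm x" by simp
  then show ?thesis using y by (simp add: divide_le_eq mult.commute)
qed

lemma cnorm_eq_sqrt: "cnorm V x = sqrt (sqnorm x)"
  unfolding cnorm_def sqnorm_def ..

lemma cnorm_nonneg: "cnorm V x \<ge> 0"
  using sqnorm_nonneg[of x] by (simp add: cnorm_eq_sqrt)

lemma cnorm_power2: "(cnorm V x)\<^sup>2 = sqnorm x"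
  using sqnorm_nonneg[of x] by (simp add: cnorm_eq_sqrt)

lemma cnorm_eq_zero_iff: "cnorm V x = 0 \<longleftrightarrow> x = 0"
  using sqnorm_nonneg[of x] sqnorm_eq_zero_iff[of x] by (simp add: cnorm_eq_sqrt)

lemma inner_le_cnorm: "cmod (inner V x y) \<le> cnorm V x * cnorm V y"
  using Cauchy_Schwarz_sq[of x y] cnorm_nonneg[of x] cnorm_nonneg[of y]
  by (metis cnorm_power2 mult_nonneg_nonneg power2_le_imp_le power_mult_distrib)

lemma cnorm_triangle: "cnorm V (x + y) \<le> cnorm V x + cnorm V y"
proof -
  have "Re (inner V x y) \<le> cnorm V x * cnorm V y"
    using inner_le_cnorm[of x y] complex_Re_le_cmod order_trans by blast
  then have "(cnorm V (x + y))\<^sup>2 \<le> (cnorm V x + cnorm V y)\<^sup>2"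
    by (simp add: cnorm_power2 sqnorm_add power2_sum)
  then show ?thesis
    using cnorm_nonneg by (meson add_nonneg_nonneg power2_le_imp_le)
qed

lemma cnorm_smul: "cnorm V (smul V a x) = cmod a * cnorm V x"
  by (simp add: cnorm_eq_sqrt sqnorm_smul real_sqrt_mult)

lemma cnorm_minus: "cnorm V (- x) = cnorm V x"
  by (simp add: cnorm_eq_sqrt sqnorm_minus)

lemma cnorm_triangle_diff: "cnorm V (x - y) \<le> cnorm V x + cnorm V y"
  using cnorm_triangle[of x "- y"] cnorm_minus[of y] by simp

lemma orthonormal_basis_nonzero:
  assumes "orthonormal_basis_of V N E" "E \<noteq> {}"
  obtains e where "e \<in> N" "e \<noteq> 0"
proof -
  obtain e where "e \<in> E"
    using assms(2) by blast
  then have "e \<in> N" "inner V e e = 1"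
    using assms(1) unfolding orthonormal_basis_of_def by auto
  moreover from this(2) have "e \<noteq> 0"
    by auto
  ultimately show ?thesis
    using that by blast
qed

lemma graph_subspace_zero: "graph_subspace V G \<Longrightarrow> (0, 0) \<in> G"
  unfolding graph_subspace_def by blast

lemma graph_subspace_add: "graph_subspace V G \<Longrightarrow> (x, y) \<in> G \<Longrightarrow> (u, v) \<in> G \<Longrightarrow> (x + u, y + v) \<in> G"
  unfolding graph_subspace_def by blast

lemma graph_subspace_smul: "graph_subspace V G \<Longrightarrow> (x, y) \<in> G \<Longrightarrow> (smul V a x, smul V a y) \<in> G"
  unfolding graph_subspace_def by blast

lemma graph_subspace_diff: "graph_subspace V G \<Longrightarrow> (x, y) \<in> G \<Longrightarrow> (u, v) \<in> G \<Longrightarrow> (x - u, y - v) \<in> G"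
  using graph_subspace_add[of G x y "- u" "- v"] graph_subspace_smul[of G u v "- 1"]
  by (simp add: smul_minus_left smul_one)

definition converges_to :: "(nat \<Rightarrow> 'a) \<Rightarrow> 'a \<Rightarrow> bool" where
  "converges_to X L \<longleftrightarrow> (\<lambda>n. cnorm V (X n - L)) \<longlonglongrightarrow> 0"

definition cauchy_seq :: "(nat \<Rightarrow> 'a) \<Rightarrow> bool" where
  "cauchy_seq X \<longleftrightarrow> (\<forall>e>0. \<exists>N. \<forall>m\<ge>N. \<forall>n\<ge>N. cnorm V (X m - X n) < e)"

lemma cauchy_seq_converges: "cauchy_seq X \<Longrightarrow> \<exists>L. converges_to X L"
  using hilbert unfolding hilbert_space_def cauchy_seq_def converges_to_def by metis

lemma converges_to_diff:
  assumes "converges_to X L" "converges_to Y M"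
  shows "converges_to (\<lambda>n. X n - Y n) (L - M)"
  unfolding converges_to_def
proof (rule Lim_null_comparison)
  show "\<forall>\<^sub>F n in sequentially. norm (cnorm V (X n - Y n - (L - M))) \<le> cnorm V (X n - L) + cnorm V (Y n - M)"
  proof (intro always_eventually allI)
    fix n
    have "X n - Y n - (L - M) = (X n - L) - (Y n - M)"
      by (simp add: algebra_simps)
    then show "norm (cnorm V (X n - Y n - (L - M))) \<le> cnorm V (X n - L) + cnorm V (Y n - M)"
      using cnorm_triangle_diff cnorm_nonneg by (metis real_norm_def abs_of_nonneg)
  qed
  show "(\<lambda>n. cnorm V (X n - L) + cnorm V (Y n - M)) \<longlonglongrightarrow> 0"
    using assms tendsto_add[of _ 0 _ _ 0] unfolding converges_to_def by fastforce
qed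

lemma converges_to_smul: "converges_to X L \<Longrightarrow> converges_to (\<lambda>n. smul V a (X n)) (smul V a L)"
  unfolding converges_to_def
  using tendsto_mult_right_zero[of "\<lambda>n. cnorm V (X n - L)" sequentially "cmod a"]
  by (simp add: cnorm_smul smul_diff_right [symmetric])

lemma converges_to_unique:
  assumes "converges_to X L" "converges_to X M"
  shows "L = M"
proof -
  have "(\<lambda>n. cnorm V (X n - M) + cnorm V (X n - L)) \<longlonglongrightarrow> 0"
    using assms tendsto_add[of _ 0 _ _ 0] unfolding converges_to_def by fastforce
  then have "cnorm V (L - M) \<le> 0"
  proof (rule LIMSEQ_le_const)
    have "L - M = (X n - M) - (X n - L)" for n
      by (simp add: algebra_simps)
    then show "\<exists>N. \<forall>n\<ge>N. cnorm V (L - M) \<le> cnorm V (X n - M) + cnorm V (X n - L)"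
      using cnorm_triangle_diff by metis
  qed
  then show ?thesis
    using cnorm_nonneg[of "L - M"] cnorm_eq_zero_iff[of "L - M"] by simp
qed

lemma converges_to_cauchy_seq:
  assumes "converges_to X L"
  shows "cauchy_seq X"
  unfolding cauchy_seq_def
proof (intro allI impI)
  fix e :: real
  assume "e > 0"
  then obtain N where N: "\<And>n. n \<ge> N \<Longrightarrow> cnorm V (X n - L) < e / 2"
    using assms cnorm_nonneg unfolding converges_to_def LIMSEQ_iff
    by (metis half_gt_zero real_norm_def diff_zero abs_of_nonneg)
  have "cnorm V (X m - X n) < e" if "m \<ge> N" "n \<ge> N" for m n
  proof -
    have "X m - X n = (X m - L) - (X n - L)"
      by (simp add: algebra_simps)
    then have "cnorm V (X m - X n) \<le> cnorm V (X m - L) + cnorm V (X n - L)"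
      using cnorm_triangle_diff by metis
    with N[OF that(1)] N[OF that(2)] show ?thesis by linarith
  qed
  then show "\<exists>N. \<forall>m\<ge>N. \<forall>n\<ge>N. cnorm V (X m - X n) < e" by blast
qed

lemma cauchy_seq_dominated:
  assumes X: "cauchy_seq X" and c: "c \<ge> 0"
    and dom: "\<And>m n. cnorm V (Y m - Y n) \<le> c * cnorm V (X m - X n)"
  shows "cauchy_seq Y"
  unfolding cauchy_seq_def
proof (intro allI impI)
  fix e :: real
  assume e: "e > 0"
  then obtain N where N: "\<And>m n. m \<ge> N \<Longrightarrow> n \<ge> N \<Longrightarrow> cnorm V (X m - X n) < e / (c + 1)"
    using X c unfolding cauchy_seq_def by (metis add_nonneg_pos divide_pos_pos zero_less_one)
  have "cnorm V (Y m - Y n) < e" if "m \<ge> N" "n \<ge> N" for m n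
  proof -
    have "c * cnorm V (X m - X n) \<le> c * (e / (c + 1))"
      using N[OF that] c by (intro mult_left_mono) simp_all
    also have "\<dots> < e"
      using c e by (simp add: field_simps)
    finally show ?thesis using dom[of m n] by linarith
  qed
  then show "\<exists>N. \<forall>m\<ge>N. \<forall>n\<ge>N. cnorm V (Y m - Y n) < e" by blast
qed

lemma cauchy_seq_add:
  assumes X: "cauchy_seq X" and Y: "cauchy_seq Y"
  shows "cauchy_seq (\<lambda>n. X n + Y n)"
  unfolding cauchy_seq_def
proof (intro allI impI)
  fix e :: real
  assume "e > 0"
  then obtain N1 N2 where
    N1: "\<And>m n. m \<ge> N1 \<Longrightarrow> n \<ge> N1 \<Longrightarrow> cnorm V (X m - X n) < e / 2" and
    N2: "\<And>m n. m \<ge> N2 \<Longrightarrow> n \<ge> N2 \<Longrightarrow> cnorm V (Y m - Y n) < e / 2"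
    using X Y unfolding cauchy_seq_def by (metis half_gt_zero)
  have "cnorm V ((X m + Y m) - (X n + Y n)) < e" if "m \<ge> max N1 N2" "n \<ge> max N1 N2" for m n
  proof -
    have "(X m + Y m) - (X n + Y n) = (X m - X n) + (Y m - Y n)"
      by (simp add: algebra_simps)
    then have "cnorm V ((X m + Y m) - (X n + Y n)) \<le> cnorm V (X m - X n) + cnorm V (Y m - Y n)"
      using cnorm_triangle by metis
    with N1[of m n] N2[of m n] that show ?thesis by simp
  qed
  then show "\<exists>N. \<forall>m\<ge>N. \<forall>n\<ge>N. cnorm V ((X m + Y m) - (X n + Y n)) < e" by blast
qed

lemma cauchy_seq_of_sqnorm_bound:
  assumes c: "c \<ge> 0"
    and bound: "\<And>m n. sqnorm (X m - X n) \<le> c * inverse (real (Suc m)) + c * inverse (real (Suc n))"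
  shows "cauchy_seq X"
  unfolding cauchy_seq_def
proof (intro allI impI)
  fix e :: real
  assume e: "e > 0"
  obtain N :: nat where "2 * c / e\<^sup>2 < real N"
    using reals_Archimedean2 by blast
  with e have N: "2 * c * inverse (real (Suc N)) < e\<^sup>2"
    by (simp add: field_simps) (smt (verit) mult_right_mono of_nat_0_le_iff zero_le_power2)
  have "cnorm V (X m - X n) < e" if "m \<ge> N" "n \<ge> N" for m n
  proof -
    have "c * inverse (real (Suc m)) \<le> c * inverse (real (Suc N))"
      "c * inverse (real (Suc n)) \<le> c * inverse (real (Suc N))"
      using that c by (simp_all add: mult_left_mono)
    with bound[of m n] N have "sqnorm (X m - X n) < e\<^sup>2" by linarith
    then show ?thesis
      using e cnorm_power2 cnorm_nonneg by (metis power2_less_imp_less less_imp_le)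
  qed
  then show "\<exists>N. \<forall>m\<ge>N. \<forall>n\<ge>N. cnorm V (X m - X n) < e" by blast
qed

lemma resolvent_set_boundE:
  assumes "l \<in> resolvent_set V A"
  obtains M where "M \<ge> 0" "\<And>x y. (x, y + smul V l x) \<in> A \<Longrightarrow> cnorm V x \<le> M * cnorm V y"
proof -
  obtain M where M: "\<And>x y. (x, y + smul V l x) \<in> A \<Longrightarrow> cnorm V x \<le> M * cnorm V y"
    using assms unfolding resolvent_set_def by blast
  have "cnorm V x \<le> max M 0 * cnorm V y" if "(x, y + smul V l x) \<in> A" for x y
    using M[OF that] cnorm_nonneg[of y] by (meson max.cobounded1 mult_right_mono order_trans)
  then show ?thesis
    using that[of "max M 0"] by simp
qed

definition linear_subspace :: "'a set \<Rightarrow> bool" where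
  "linear_subspace R \<longleftrightarrow> 0 \<in> R \<and> (\<forall>x\<in>R. \<forall>y\<in>R. x + y \<in> R) \<and> (\<forall>a. \<forall>x\<in>R. smul V a x \<in> R)"

definition seq_closed :: "'a set \<Rightarrow> bool" where
  "seq_closed R \<longleftrightarrow> (\<forall>X L. (\<forall>n. X n \<in> R) \<longrightarrow> converges_to X L \<longrightarrow> L \<in> R)"

lemma sqnorm_diff_le_of_near_minimal:
  assumes R: "linear_subspace R" and r: "r \<in> R" "r' \<in> R"
    and lower: "\<And>s. s \<in> R \<Longrightarrow> \<delta> \<le> sqnorm (y - s)"
  shows "sqnorm (r - r') \<le> 2 * (sqnorm (y - r) - \<delta>) + 2 * (sqnorm (y - r') - \<delta>)"
proof -
  define m where "m = smul V (1/2) (r + r')"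
  have "m \<in> R"
    using R r unfolding linear_subspace_def m_def by blast
  have "smul V 2 m = r + r'"
    unfolding m_def by (simp add: smul_smul smul_one)
  moreover have "smul V 2 y = y + y"
    using smul_add_left[of 1 1 y] by (simp add: smul_one)
  ultimately have "(y - r) + (y - r') = smul V 2 (y - m)"
    by (simp add: smul_diff_right algebra_simps)
  then have "sqnorm ((y - r) + (y - r')) = 4 * sqnorm (y - m)"
    by (simp add: sqnorm_smul)
  moreover have "sqnorm ((y - r) - (y - r')) = sqnorm (r - r')"
    using sqnorm_minus[of "r - r'"] by simp
  ultimately show ?thesis
    using parallelogram[of "y - r" "y - r'"] lower[OF \<open>m \<in> R\<close>] by (smt (verit))
qed

lemma nearest_point_orthogonal:
  assumes R: "linear_subspace R" and r: "r \<in> R" "s \<in> R"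
    and nearest: "\<And>s. s \<in> R \<Longrightarrow> sqnorm (y - r) \<le> sqnorm (y - s)"
  shows "inner V (y - r) s = 0"
proof (rule ccontr)
  define c where "c = inner V (y - r) s"
  assume "inner V (y - r) s \<noteq> 0"
  then have c_pos: "(cmod c)\<^sup>2 > 0"
    unfolding c_def by simp
  \<comment> \<open>for the small step \<open>t = \<sigma> c\<close>, the point \<open>r + t s \<in> R\<close> would be strictly closer to \<open>y\<close>\<close>
  define \<sigma> where "\<sigma> = 1 / (sqnorm s + 1)"
  have \<sigma>: "\<sigma> > 0" "\<sigma> * sqnorm s < 1"
    unfolding \<sigma>_def using sqnorm_nonneg[of s] by (simp_all add: field_simps)
  define t where "t = complex_of_real \<sigma> * c"
  have "r + smul V t s \<in> R"
    using R r unfolding linear_subspace_def by blast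
  then have "sqnorm (y - r) \<le> sqnorm ((y - r) - smul V t s)"
    using nearest by (simp add: algebra_simps)
  also have "\<dots> = sqnorm (y - r) + (cmod t)\<^sup>2 * sqnorm s - 2 * Re (cnj t * c)"
    unfolding c_def by (simp add: sqnorm_diff sqnorm_smul inner_smul_right)
  also have "cnj t * c = complex_of_real (\<sigma> * (cmod c)\<^sup>2)"
    unfolding t_def using complex_norm_square[of c] by (simp add: mult.assoc)
  also have "(cmod t)\<^sup>2 = \<sigma>\<^sup>2 * (cmod c)\<^sup>2"
    unfolding t_def by (simp add: norm_mult power_mult_distrib)
  finally have "0 \<le> \<sigma> * (cmod c)\<^sup>2 * (\<sigma> * sqnorm s - 2)"
    by (simp add: algebra_simps power2_eq_square)
  moreover have "\<sigma> * (cmod c)\<^sup>2 > 0"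
    using \<sigma> c_pos by simp
  ultimately show False
    using \<sigma>(2) by (simp add: zero_le_mult_iff)
qed

lemma sqnorm_le_of_converges_to:
  assumes L: "converges_to X L" and near: "\<And>k. sqnorm (y - X k) \<le> \<delta> + inverse (real (Suc k))"
  shows "sqnorm (y - L) \<le> \<delta>"
proof -
  have dist: "cnorm V (y - L) \<le> sqrt \<delta>"
  proof (rule LIMSEQ_le_const)
    have "(\<lambda>k. sqrt (\<delta> + inverse (real (Suc k)))) \<longlonglongrightarrow> sqrt \<delta>"
      using LIMSEQ_inverse_real_of_nat_add[of \<delta>] by (rule tendsto_real_sqrt)
    then show "(\<lambda>k. sqrt (\<delta> + inverse (real (Suc k))) + cnorm V (X k - L)) \<longlonglongrightarrow> sqrt \<delta>"
      using L tendsto_add[of _ "sqrt \<delta>" _ _ 0] unfolding converges_to_def by fastforce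
    have "cnorm V (y - L) \<le> sqrt (\<delta> + inverse (real (Suc k))) + cnorm V (X k - L)" for k
    proof -
      have "cnorm V (y - L) \<le> cnorm V (y - X k) + cnorm V (X k - L)"
        using cnorm_triangle[of "y - X k" "X k - L"] by simp
      moreover have "cnorm V (y - X k) \<le> sqrt (\<delta> + inverse (real (Suc k)))"
        using near[of k] by (simp add: cnorm_eq_sqrt)
      ultimately show ?thesis by linarith
    qed
    then show "\<exists>N. \<forall>k\<ge>N. cnorm V (y - L) \<le> sqrt (\<delta> + inverse (real (Suc k))) + cnorm V (X k - L)"
      by blast
  qed
  have "\<delta> \<ge> 0"
    using order_trans[OF cnorm_nonneg dist] by simp
  then show ?thesis
    using power_mono[OF dist cnorm_nonneg, of 2] by (simp add: cnorm_power2)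
qed

lemma exists_nearest_point:
  assumes R: "linear_subspace R" "seq_closed R"
  obtains r where "r \<in> R" "\<And>s. s \<in> R \<Longrightarrow> sqnorm (y - r) \<le> sqnorm (y - s)"
proof -
  define \<delta> where "\<delta> = (INF s\<in>R. sqnorm (y - s))"
  have "0 \<in> R"
    using R unfolding linear_subspace_def by blast
  have bdd: "bdd_below ((\<lambda>s. sqnorm (y - s)) ` R)"
    using sqnorm_nonneg by (intro bdd_belowI2) auto
  then have lower: "\<delta> \<le> sqnorm (y - s)" if "s \<in> R" for s
    unfolding \<delta>_def using that by (rule cINF_lower)
  have "\<exists>r\<in>R. sqnorm (y - r) < \<delta> + inverse (real (Suc k))" for k
    using cINF_less_iff[OF _ bdd, of "\<delta> + inverse (real (Suc k))"] \<open>0 \<in> R\<close> unfolding \<delta>_def by auto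
  then obtain X where X: "\<And>k. X k \<in> R" "\<And>k. sqnorm (y - X k) < \<delta> + inverse (real (Suc k))"
    by metis
  have near: "sqnorm (X m - X n) \<le> 2 * (sqnorm (y - X m) - \<delta>) + 2 * (sqnorm (y - X n) - \<delta>)" for m n
    by (rule sqnorm_diff_le_of_near_minimal[OF R(1) X(1) X(1)]) (rule lower)
  have "sqnorm (X m - X n) \<le> 2 * inverse (real (Suc m)) + 2 * inverse (real (Suc n))" for m n
    using near[of m n] X(2)[of m] X(2)[of n] by argo
  then have "cauchy_seq X"
    by (rule cauchy_seq_of_sqnorm_bound[rotated]) simp
  then obtain L where L: "converges_to X L"
    using cauchy_seq_converges by blast
  then have "L \<in> R"
    using R(2) X(1) unfolding seq_closed_def by blast
  have "sqnorm (y - L) \<le> \<delta>"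
    by (rule sqnorm_le_of_converges_to[OF L less_imp_le[OF X(2)]])
  then show ?thesis
    using that \<open>L \<in> R\<close> lower by fastforce
qed

theorem orthogonal_decomposition:
  assumes "linear_subspace R" "seq_closed R"
  obtains r where "r \<in> R" "\<And>s. s \<in> R \<Longrightarrow> inner V (y - r) s = 0"
  using exists_nearest_point[OF assms] nearest_point_orthogonal[OF assms(1)] by metis

end

section \<open>Closed symmetric operators\<close>

locale closed_symmetric = hilbert V for V :: "('a::ab_group_add) cip" +
  fixes S :: "('a \<times> 'a) set"
  assumes symmetric: "symmetric_operator V S" and S_closed: "closed_operator V S"

begin

lemma graph_subspace_S: "graph_subspace V S"
  using symmetric unfolding symmetric_operator_def is_operator_def by blast

lemma S_subset_adjoint: "S \<subseteq> adjoint V S"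
  using symmetric unfolding symmetric_operator_def by blast

lemma dom_dense: "e > 0 \<Longrightarrow> \<exists>d\<in>Defs.dom S. cnorm V (x - d) < e"
  using symmetric unfolding symmetric_operator_def densely_defined_def by blast

lemma mem_adjoint_iff: "(y, z) \<in> adjoint V S \<longleftrightarrow> (\<forall>x w. (x, w) \<in> S \<longrightarrow> inner V w y = inner V x z)"
  unfolding adjoint_def by auto

lemma graph_subspace_adjoint: "graph_subspace V (adjoint V S)"
  unfolding graph_subspace_def mem_adjoint_iff by (simp add: inner_add_right inner_smul_right)

lemma adjoint_zero_imp:
  assumes "(0, z) \<in> adjoint V S"
  shows "z = 0"
proof -
  have orth: "inner V d z = 0" if "d \<in> Defs.dom S" for d
    using that assms unfolding mem_dom_iff mem_adjoint_iff by force
  have "sqnorm z \<le> e" if "e > 0" for e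
  proof -
    obtain d where d: "d \<in> Defs.dom S" "cnorm V (z - d) < sqrt e"
      using dom_dense[of "sqrt e" z] \<open>e > 0\<close> by auto
    have "sqnorm (z - d) = sqnorm z + sqnorm d"
      using orth[OF d(1)] Re_inner_commute[of z d] by (simp add: sqnorm_diff)
    then have "sqnorm z \<le> sqnorm (z - d)"
      using sqnorm_nonneg[of d] by simp
    also have "\<dots> < e"
      using d(2) \<open>e > 0\<close> by (simp add: cnorm_eq_sqrt)
    finally show ?thesis by simp
  qed
  then have "sqnorm z \<le> 0"
    by (metis field_le_epsilon add_0)
  then show ?thesis
    using sqnorm_nonneg[of z] sqnorm_eq_zero_iff[of z] by simp
qed

lemma adjoint_single_valued: "(x, y) \<in> adjoint V S \<Longrightarrow> (x, y') \<in> adjoint V S \<Longrightarrow> y = y'"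
  using graph_subspace_diff[OF graph_subspace_adjoint, of x y x y'] adjoint_zero_imp[of "y - y'"] by simp

lemma adjoint_eigenvalue_unique:
  assumes "(f, smul V l f) \<in> adjoint V S" "(f, smul V l' f) \<in> adjoint V S" "f \<noteq> 0"
  shows "l = l'"
proof -
  have "smul V (l - l') f = 0"
    using adjoint_single_valued[OF assms(1,2)] by (simp add: smul_diff_left)
  then show ?thesis
    using smul_cancel[of "l - l'" f] assms(3) by auto
qed

lemma S_on_difference_of_defects:
  assumes dw: "(d, w) \<in> S" and f: "(f, smul V l f) \<in> adjoint V S"
    and g: "(g, smul V l' g) \<in> adjoint V S" and fdg: "f = d + g"
  shows "w = smul V l f - smul V l' g"
proof -
  have "(d, w) \<in> adjoint V S"
    using dw S_subset_adjoint by blast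
  moreover have "(d, smul V l f - smul V l' g) \<in> adjoint V S"
    using graph_subspace_diff[OF graph_subspace_adjoint f g] fdg by simp
  ultimately show ?thesis
    by (rule adjoint_single_valued)
qed

lemma Im_inner_S: "(d, w) \<in> S \<Longrightarrow> Im (inner V d w) = 0"
proof -
  assume dw: "(d, w) \<in> S"
  then have "(d, w) \<in> adjoint V S"
    using S_subset_adjoint by blast
  then have "inner V w d = inner V d w"
    using dw unfolding mem_adjoint_iff by blast
  then show ?thesis
    using inner_commute[of d w] by (metis cnj.simps(2) neg_equal_zero)
qed

lemma sqnorm_shift_lower_bound:
  assumes "(d, w) \<in> S"
  shows "(Im \<mu>)\<^sup>2 * sqnorm d \<le> sqnorm (w - smul V \<mu> d)"
proof -
  define a b where "a = complex_of_real (Re \<mu>)" and "b = \<i> * complex_of_real (Im \<mu>)"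
  have split: "w - smul V \<mu> d = (w - smul V a d) - smul V b d"
    using smul_add_left[of a b d] complex_eq[of \<mu>] unfolding a_def b_def by (simp add: algebra_simps)
  have "Im (inner V w d) = 0"
    using Im_inner_S[OF assms] inner_commute[of d w] by simp
  then have "Re (inner V (w - smul V a d) (smul V b d)) = 0"
    unfolding a_def b_def using Im_inner_self[of d]
    by (simp add: inner_smul_right inner_diff_left inner_smul_left)
  then have "sqnorm (w - smul V \<mu> d) = sqnorm (w - smul V a d) + (Im \<mu>)\<^sup>2 * sqnorm d"
    unfolding split b_def by (simp add: sqnorm_diff sqnorm_smul norm_mult)
  then show ?thesis
    using sqnorm_nonneg[of "w - smul V a d"] by simp
qed

lemma cnorm_shift_lower_bound:
  assumes "(d, w) \<in> S"
  shows "\<bar>Im \<mu>\<bar> * cnorm V d \<le> cnorm V (w - smul V \<mu> d)"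
  using real_sqrt_le_mono[OF sqnorm_shift_lower_bound[OF assms, of \<mu>]]
  by (simp add: cnorm_eq_sqrt real_sqrt_mult)

definition shifted_range :: "complex \<Rightarrow> 'a set" where
  "shifted_range \<mu> = {w - smul V \<mu> d | d w. (d, w) \<in> S}"

lemma linear_subspace_shifted_range: "linear_subspace (shifted_range \<mu>)"
  unfolding linear_subspace_def
proof (intro conjI ballI allI)
  have "(0::'a) = 0 - smul V \<mu> 0"
    by simp
  then show "0 \<in> shifted_range \<mu>"
    unfolding shifted_range_def using graph_subspace_zero[OF graph_subspace_S] by blast
next
  fix x y
  assume "x \<in> shifted_range \<mu>" "y \<in> shifted_range \<mu>"
  then obtain d w d' w' where "(d, w) \<in> S" "(d', w') \<in> S"
    and "x = w - smul V \<mu> d" "y = w' - smul V \<mu> d'"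
    unfolding shifted_range_def by blast
  moreover from calculation have "x + y = (w + w') - smul V \<mu> (d + d')"
    by (simp add: smul_add_right)
  ultimately show "x + y \<in> shifted_range \<mu>"
    unfolding shifted_range_def using graph_subspace_add[OF graph_subspace_S] by blast
next
  fix a x
  assume "x \<in> shifted_range \<mu>"
  then obtain d w where "(d, w) \<in> S" "x = w - smul V \<mu> d"
    unfolding shifted_range_def by blast
  moreover from calculation have "smul V a x = smul V a w - smul V \<mu> (smul V a d)"
    by (simp add: smul_diff_right smul_smul mult.commute)
  ultimately show "smul V a x \<in> shifted_range \<mu>"
    unfolding shifted_range_def using graph_subspace_smul[OF graph_subspace_S] by blast
qed

lemma seq_closed_shifted_range:
  assumes \<mu>: "Im \<mu> \<noteq> 0"
  shows "seq_closed (shifted_range \<mu>)"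
  unfolding seq_closed_def
proof (intro allI impI)
  fix X L
  assume "\<forall>n. X n \<in> shifted_range \<mu>" and XL: "converges_to X L"
  then have "\<forall>n. \<exists>d w. (d, w) \<in> S \<and> X n = w - smul V \<mu> d"
    unfolding shifted_range_def by blast
  then obtain D W where DW: "\<And>n. (D n, W n) \<in> S" "\<And>n. X n = W n - smul V \<mu> (D n)"
    by metis
  have X: "cauchy_seq X"
    using XL by (rule converges_to_cauchy_seq)
  have "\<bar>Im \<mu>\<bar> * cnorm V (D m - D n) \<le> cnorm V (X m - X n)" for m n
    using cnorm_shift_lower_bound[OF graph_subspace_diff[OF graph_subspace_S DW(1) DW(1)], of \<mu> m n]
    by (simp add: DW(2) smul_diff_right algebra_simps)
  then have D: "cauchy_seq D"
    using \<mu> by (intro cauchy_seq_dominated[OF X, of "1 / \<bar>Im \<mu>\<bar>"]) (simp_all add: field_simps)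
  have "cauchy_seq (\<lambda>n. smul V \<mu> (D n))"
    by (rule cauchy_seq_dominated[OF D, of "cmod \<mu>"]) (simp_all add: cnorm_smul smul_diff_right [symmetric])
  then have "cauchy_seq (\<lambda>n. X n + smul V \<mu> (D n))"
    by (rule cauchy_seq_add[OF X])
  then have "cauchy_seq W"
    by (simp add: DW(2))
  then obtain D0 W0 where D0: "converges_to D D0" and W0: "converges_to W W0"
    using D cauchy_seq_converges by blast
  have "(D0, W0) \<in> S"
    using S_closed DW(1) D0 W0 unfolding closed_operator_def converges_to_def by blast
  moreover have "converges_to X (W0 - smul V \<mu> D0)"
    unfolding DW(2) by (intro converges_to_diff converges_to_smul W0 D0)
  then have "L = W0 - smul V \<mu> D0"
    using XL converges_to_unique by blast
  ultimately show "L \<in> shifted_range \<mu>"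
    unfolding shifted_range_def by blast
qed

lemma inner_shifted_range_defect:
  assumes "(d, w) \<in> S" "(n, smul V (cnj \<mu>) n) \<in> adjoint V S"
  shows "inner V (w - smul V \<mu> d) n = 0"
proof -
  have "inner V w n = inner V d (smul V (cnj \<mu>) n)"
    using assms unfolding mem_adjoint_iff by blast
  then show ?thesis
    by (simp add: inner_diff_left inner_smul_left inner_smul_right)
qed

lemma shifted_range_defect_decomposition:
  assumes "Im \<mu> \<noteq> 0"
  obtains d w n where "(d, w) \<in> S" "(n, smul V (cnj \<mu>) n) \<in> adjoint V S" "y = (w - smul V \<mu> d) + n"
proof -
  obtain r where r: "r \<in> shifted_range \<mu>" and orth: "\<And>s. s \<in> shifted_range \<mu> \<Longrightarrow> inner V (y - r) s = 0"
    using orthogonal_decomposition[OF linear_subspace_shifted_range seq_closed_shifted_range[OF assms]]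
    by blast
  have "(y - r, smul V (cnj \<mu>) (y - r)) \<in> adjoint V S"
    unfolding mem_adjoint_iff
  proof (intro allI impI)
    fix d w
    assume "(d, w) \<in> S"
    then have "inner V (y - r) (w - smul V \<mu> d) = 0"
      by (intro orth) (auto simp: shifted_range_def)
    then have "inner V (w - smul V \<mu> d) (y - r) = 0"
      using inner_commute[of "y - r" "w - smul V \<mu> d"] by simp
    then show "inner V w (y - r) = inner V d (smul V (cnj \<mu>) (y - r))"
      by (simp add: inner_diff_left inner_smul_left inner_smul_right)
  qed
  moreover obtain d w where "(d, w) \<in> S" "r = w - smul V \<mu> d"
    using r unfolding shifted_range_def by blast
  ultimately show ?thesis
    using that[of d w "y - r"] by simp
qed

lemma cnorm_le_shifted_range_plus_defect:
  assumes dw: "(d, w) \<in> S" and n: "(n, smul V (cnj \<mu>) n) \<in> adjoint V S"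
  shows "\<bar>Im \<mu>\<bar> * cnorm V d \<le> cnorm V ((w - smul V \<mu> d) + n)"
    and "cnorm V n \<le> cnorm V ((w - smul V \<mu> d) + n)"
proof -
  have "sqnorm ((w - smul V \<mu> d) + n) = sqnorm (w - smul V \<mu> d) + sqnorm n"
    by (simp add: sqnorm_add inner_shifted_range_defect[OF dw n])
  then have "cnorm V (w - smul V \<mu> d) \<le> cnorm V ((w - smul V \<mu> d) + n)"
    and "cnorm V n \<le> cnorm V ((w - smul V \<mu> d) + n)"
    using sqnorm_nonneg by (simp_all add: cnorm_eq_sqrt)
  then show "\<bar>Im \<mu>\<bar> * cnorm V d \<le> cnorm V ((w - smul V \<mu> d) + n)"
    and "cnorm V n \<le> cnorm V ((w - smul V \<mu> d) + n)"
    using cnorm_shift_lower_bound[OF dw, of \<mu>] by linarith+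
qed

lemma adjoint_shift_solvable:
  assumes \<mu>: "Im \<mu> \<noteq> 0"
  obtains f where "(f, y + smul V \<mu> f) \<in> adjoint V S"
    and "cnorm V f \<le> (3 / (2 * \<bar>Im \<mu>\<bar>)) * cnorm V y"
proof -
  obtain d w n where dw: "(d, w) \<in> S" and n: "(n, smul V (cnj \<mu>) n) \<in> adjoint V S"
    and y: "y = (w - smul V \<mu> d) + n"
    using shifted_range_defect_decomposition[OF \<mu>] by blast
  have "cnj \<mu> - \<mu> = - (2 * \<i> * complex_of_real (Im \<mu>))"
    by (simp add: complex_eq_iff)
  then have c: "cmod (cnj \<mu> - \<mu>) = 2 * \<bar>Im \<mu>\<bar>" "cnj \<mu> - \<mu> \<noteq> 0"
    using \<mu> by (simp_all add: norm_mult)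
  \<comment> \<open>\<open>(S* - \<mu>) n = (cnj \<mu> - \<mu>) n\<close>, so \<open>f\<close> solves \<open>(S* - \<mu>) f = (S - \<mu>) d + n = y\<close>\<close>
  define c where "c = 1 / (cnj \<mu> - \<mu>)"
  define f where "f = d + smul V c n"
  have f: "(f, w + smul V c (smul V (cnj \<mu>) n)) \<in> adjoint V S"
    unfolding f_def using graph_subspace_add[OF graph_subspace_adjoint _ graph_subspace_smul[OF graph_subspace_adjoint n]]
      S_subset_adjoint dw by blast
  have "c * cnj \<mu> = 1 + \<mu> * c"
    using c(2) unfolding c_def by (simp add: field_simps)
  then have "smul V c (smul V (cnj \<mu>) n) = n + smul V \<mu> (smul V c n)"
    by (simp add: smul_smul smul_add_left smul_one)
  then have "w + smul V c (smul V (cnj \<mu>) n) = y + smul V \<mu> f"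
    unfolding y f_def by (simp add: smul_add_right algebra_simps)
  with f have solution: "(f, y + smul V \<mu> f) \<in> adjoint V S"
    by simp
  have "cnorm V d \<le> cnorm V y / \<bar>Im \<mu>\<bar>"
    using cnorm_le_shifted_range_plus_defect(1)[OF dw n] \<mu> unfolding y
    by (simp add: pos_le_divide_eq mult.commute)
  moreover have "cnorm V (smul V c n) \<le> cnorm V y / (2 * \<bar>Im \<mu>\<bar>)"
    using cnorm_le_shifted_range_plus_defect(2)[OF dw n] unfolding y c_def
    by (simp add: cnorm_smul norm_divide c(1) divide_right_mono)
  moreover have "cnorm V f \<le> cnorm V d + cnorm V (smul V c n)"
    unfolding f_def by (rule cnorm_triangle)
  ultimately have "cnorm V f \<le> cnorm V y / \<bar>Im \<mu>\<bar> + cnorm V y / (2 * \<bar>Im \<mu>\<bar>)"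
    by linarith
  also have "\<dots> = (3 / (2 * \<bar>Im \<mu>\<bar>)) * cnorm V y"
    using \<mu> by (simp add: field_simps)
  finally show ?thesis
    using that solution by blast
qed

lemma dom_inter_defect_trivial:
  assumes l: "Im l \<noteq> 0" and d: "d \<in> Defs.dom S" and dl: "(d, smul V l d) \<in> adjoint V S"
  shows "d = 0"
proof -
  obtain w where dw: "(d, w) \<in> S"
    using d unfolding mem_dom_iff by blast
  then have "w = smul V l d"
    using S_subset_adjoint adjoint_single_valued dl by blast
  then have "Im (cnj l * complex_of_real (sqnorm d)) = 0"
    using Im_inner_S[OF dw] by (simp add: inner_smul_right inner_self)
  then have "sqnorm d = 0"
    using l by simp
  then show ?thesis
    using sqnorm_eq_zero_iff by simp
qed

definition defect_transfers :: "complex \<Rightarrow> complex \<Rightarrow> bool" where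
  "defect_transfers l l' \<longleftrightarrow> (\<forall>k. (k, smul V l k) \<in> adjoint V S \<longrightarrow>
     (\<exists>d k'. d \<in> Defs.dom S \<and> (k', smul V l' k') \<in> adjoint V S \<and> k = d + k'))"

lemma defect_transfersD:
  assumes "defect_transfers l l'" "(k, smul V l k) \<in> adjoint V S"
  obtains d k' where "d \<in> Defs.dom S" "(k', smul V l' k') \<in> adjoint V S" "k = d + k'"
  using assms unfolding defect_transfers_def by blast

end

section \<open>Resolvent sets of proper extensions\<close>

locale proper_extension = closed_symmetric V S for V :: "('a::ab_group_add) cip" and S +
  fixes A :: "('a \<times> 'a) set"
  assumes A_operator: "is_operator V A" and S_subset_A: "S \<subseteq> A" and A_subset_adjoint: "A \<subseteq> adjoint V S"

begin

lemma graph_subspace_A: "graph_subspace V A"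
  using A_operator unfolding is_operator_def by blast

lemma resolvent_unique:
  assumes l: "l \<in> resolvent_set V A" and l': "Im l' \<noteq> 0" and tr: "defect_transfers l' l"
    and x1: "(x1, y + smul V l' x1) \<in> A" and x2: "(x2, y + smul V l' x2) \<in> A"
  shows "x1 = x2"
proof -
  define x where "x = x1 - x2"
  have xA: "(x, smul V l' x) \<in> A"
    using graph_subspace_diff[OF graph_subspace_A x1 x2] unfolding x_def by (simp add: smul_diff_right)
  then have xS: "(x, smul V l' x) \<in> adjoint V S"
    using A_subset_adjoint by blast
  then obtain d n where d: "d \<in> Defs.dom S" and n: "(n, smul V l n) \<in> adjoint V S" and x: "x = d + n"
    by (rule defect_transfersD[OF tr])
  obtain w where dw: "(d, w) \<in> S"
    using d unfolding mem_dom_iff by blast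
  have nA: "(n, smul V l' x - w) \<in> A"
    using graph_subspace_diff[OF graph_subspace_A xA] dw S_subset_A x by fastforce
  then have "smul V l' x - w = smul V l n"
    using A_subset_adjoint adjoint_single_valued n by blast
  with nA have "(n, 0 + smul V l n) \<in> A"
    by simp
  moreover have "(0, 0 + smul V l 0) \<in> A"
    using graph_subspace_zero[OF graph_subspace_A] by simp
  ultimately have "n = 0"
    using l unfolding resolvent_set_def by blast
  then have "x = 0"
    using dom_inter_defect_trivial[OF l' d] xS x by simp
  then show ?thesis
    unfolding x_def by simp
qed

text \<open>Solving \<open>(A - l') x = y\<close>: first solve \<open>(S* - l') f = y\<close>, then \<open>(A - l) u = y + (l' - l) f\<close>;
  the difference \<open>f - u\<close> lies in \<open>ker (S* - l)\<close>, and its \<open>D(S)\<close>-component \<open>d\<close> in \<open>D(S) \<dotplus> ker (S* - l')\<close>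
  corrects \<open>u\<close> to the solution \<open>u + d\<close>.\<close>

lemma corrected_solution:
  assumes tr: "defect_transfers l l'"
    and f: "(f, y + smul V l' f) \<in> adjoint V S"
    and u: "(u, y + smul V (l' - l) f + smul V l u) \<in> A"
  obtains d where "(u + d, y + smul V l' (u + d)) \<in> A"
    and "\<bar>Im l'\<bar> * cnorm V d \<le> cmod (l' - l) * cnorm V (f - u)"
proof -
  have "(u, y + smul V (l' - l) f + smul V l u) \<in> adjoint V S"
    using u A_subset_adjoint by blast
  from graph_subspace_diff[OF graph_subspace_adjoint f this]
  have "(f - u, smul V l (f - u)) \<in> adjoint V S"
    by (simp add: smul_diff_left smul_diff_right algebra_simps)
  then obtain d k where d: "d \<in> Defs.dom S" and k: "(k, smul V l' k) \<in> adjoint V S" and fu: "f - u = d + k"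
    using defect_transfersD[OF tr] by blast
  obtain w where dw: "(d, w) \<in> S"
    using d unfolding mem_dom_iff by blast
  have sum: "(u + d, (y + smul V (l' - l) f + smul V l u) + w) \<in> A"
    using graph_subspace_add[OF graph_subspace_A u] dw S_subset_A by blast
  have "(f - k, y + smul V l' (f - k)) \<in> adjoint V S"
    using graph_subspace_diff[OF graph_subspace_adjoint f k] by (simp add: smul_diff_right add_diff_eq)
  moreover have "f - k = u + d"
    using fu by (simp add: algebra_simps)
  ultimately have "(u + d, y + smul V l' (u + d)) \<in> adjoint V S"
    by simp
  moreover have "(u + d, (y + smul V (l' - l) f + smul V l u) + w) \<in> adjoint V S"
    using sum A_subset_adjoint by blast
  ultimately have "(y + smul V (l' - l) f + smul V l u) + w = y + smul V l' (u + d)"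
    by (rule adjoint_single_valued[rotated])
  with sum have solution: "(u + d, y + smul V l' (u + d)) \<in> A"
    by simp
  from graph_subspace_diff[OF graph_subspace_adjoint \<open>(f - u, smul V l (f - u)) \<in> adjoint V S\<close> k]
  have "(d, smul V l (d + k) - smul V l' k) \<in> adjoint V S"
    unfolding fu by simp
  then have "w = smul V l (d + k) - smul V l' k"
    using dw S_subset_adjoint adjoint_single_valued by blast
  then have "w - smul V l' d = smul V (l - l') (f - u)"
    unfolding fu by (simp add: smul_add_right smul_diff_left algebra_simps)
  then have "\<bar>Im l'\<bar> * cnorm V d \<le> cmod (l' - l) * cnorm V (f - u)"
    using cnorm_shift_lower_bound[OF dw, of l'] by (simp add: cnorm_smul norm_minus_commute)
  with solution show ?thesis
    by (rule that)
qed

lemma resolvent_solution_bounded: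
  assumes l: "l \<in> resolvent_set V A" and l': "Im l' \<noteq> 0" and tr: "defect_transfers l l'"
  obtains B where "\<And>y. \<exists>x. (x, y + smul V l' x) \<in> A \<and> cnorm V x \<le> B * cnorm V y"
proof -
  obtain M where "M \<ge> 0" and M: "\<And>x y. (x, y + smul V l x) \<in> A \<Longrightarrow> cnorm V x \<le> M * cnorm V y"
    using resolvent_set_boundE[OF l] by blast
  define K q where "K = 3 / (2 * \<bar>Im l'\<bar>)" and "q = cmod (l' - l)"
  define C where "C = K + M * (1 + q * K)"
  have "\<exists>x. (x, y + smul V l' x) \<in> A \<and> cnorm V x \<le> (M * (1 + q * K) + q * C / \<bar>Im l'\<bar>) * cnorm V y"
    for y
  proof -
    obtain f where f: "(f, y + smul V l' f) \<in> adjoint V S" and fK: "cnorm V f \<le> K * cnorm V y"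
      using adjoint_shift_solvable[OF l'] unfolding K_def by blast
    obtain u where u: "(u, (y + smul V (l' - l) f) + smul V l u) \<in> A"
      using l unfolding resolvent_set_def by blast
    obtain d where x: "(u + d, y + smul V l' (u + d)) \<in> A"
      and d: "\<bar>Im l'\<bar> * cnorm V d \<le> q * cnorm V (f - u)"
      using corrected_solution[OF tr f u] unfolding q_def by blast
    have "cnorm V (y + smul V (l' - l) f) \<le> cnorm V y + q * cnorm V f"
      using cnorm_triangle[of y "smul V (l' - l) f"] unfolding q_def by (simp add: cnorm_smul)
    also have "\<dots> \<le> cnorm V y + q * (K * cnorm V y)"
      using fK unfolding q_def by (simp add: mult_left_mono)
    finally have "cnorm V (y + smul V (l' - l) f) \<le> (1 + q * K) * cnorm V y"
      by (simp add: algebra_simps)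
    then have uM: "cnorm V u \<le> M * ((1 + q * K) * cnorm V y)"
      using order_trans[OF M[OF u] mult_left_mono[OF _ \<open>M \<ge> 0\<close>]] by blast
    then have "cnorm V (f - u) \<le> C * cnorm V y"
      using cnorm_triangle_diff[of f u] fK unfolding C_def by (simp add: algebra_simps)
    then have "q * cnorm V (f - u) \<le> q * (C * cnorm V y)"
      unfolding q_def by (simp add: mult_left_mono)
    with d have "cnorm V d \<le> q * (C * cnorm V y) / \<bar>Im l'\<bar>"
      using l' by (simp add: pos_le_divide_eq mult.commute)
    then have "cnorm V (u + d) \<le> (M * (1 + q * K) + q * C / \<bar>Im l'\<bar>) * cnorm V y"
      using uM cnorm_triangle[of u d] by (simp add: distrib_right times_divide_eq_left mult.assoc)
    then show ?thesis
      using x by blast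
  qed
  then show ?thesis
    using that by blast
qed

lemma resolvent_transfer:
  assumes l: "l \<in> resolvent_set V A" and l': "Im l' \<noteq> 0"
    and tr: "defect_transfers l l'" "defect_transfers l' l"
  shows "l' \<in> resolvent_set V A"
proof -
  obtain B where B: "\<And>y. \<exists>x. (x, y + smul V l' x) \<in> A \<and> cnorm V x \<le> B * cnorm V y"
    using resolvent_solution_bounded[OF l l' tr(1)] by blast
  have unique: "x1 = x2" if "(x1, y + smul V l' x1) \<in> A" "(x2, y + smul V l' x2) \<in> A" for x1 x2 y
    using resolvent_unique[OF l l' tr(2) that] .
  have "\<forall>y. \<exists>!x. (x, y + smul V l' x) \<in> A"
    using B unique by blast
  moreover have "\<forall>x y. (x, y + smul V l' x) \<in> A \<longrightarrow> cnorm V x \<le> B * cnorm V y"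
    using B unique by blast
  ultimately show ?thesis
    unfolding resolvent_set_def by blast
qed

end

section \<open>Phillips symmetric operators\<close>

locale phillips = closed_symmetric V S for V :: "('a::ab_group_add) cip" and S +
  fixes K :: "('k::ab_group_add) cip" and Gm Gp :: "'a \<Rightarrow> 'k" and C :: "'k \<Rightarrow> 'k"
  assumes triplet: "boundary_triplet V S K Gm Gp"
    and characteristic_constant: "\<And>l. Im l > 0 \<Longrightarrow>
      {u + v | u v. u \<in> Defs.dom S \<and> v \<in> defect_space V S l} = {f \<in> Defs.dom (adjoint V S). C (Gp f) = Gm f}"
    and defect_nonzero: "\<exists>e. e \<in> defect_space V S \<i> \<and> e \<noteq> 0"

sublocale phillips \<subseteq> K: hilbert K
  using triplet unfolding boundary_triplet_def hilbert_def by blast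

context phillips
begin

lemma boundary_add:
  "f \<in> Defs.dom (adjoint V S) \<Longrightarrow> g \<in> Defs.dom (adjoint V S) \<Longrightarrow> Gm (f + g) = Gm f + Gm g \<and> Gp (f + g) = Gp f + Gp g"
  using triplet unfolding boundary_triplet_def by blast

lemma green_identity:
  "(f, f') \<in> adjoint V S \<Longrightarrow> (g, g') \<in> adjoint V S \<Longrightarrow>
   inner V f' g - inner V f g' = \<i> * (inner K (Gp f) (Gp g) - inner K (Gm f) (Gm g))"
  using triplet unfolding boundary_triplet_def by blast

lemma boundary_surj: "\<exists>f\<in>Defs.dom (adjoint V S). Gm f = a \<and> Gp f = b"
  using triplet unfolding boundary_triplet_def by blast

lemma boundary_vanish_on_dom:
  assumes d: "d \<in> Defs.dom S"
  shows "Gm d = 0" "Gp d = 0"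
proof -
  obtain w where dw: "(d, w) \<in> S"
    using d unfolding mem_dom_iff by blast
  have "(d, w) \<in> adjoint V S"
    using dw S_subset_adjoint by blast
  then have green: "inner K (Gp d) (Gp g) = inner K (Gm d) (Gm g)" if "g \<in> Defs.dom (adjoint V S)" for g
    using that dw green_identity unfolding mem_dom_iff mem_adjoint_iff by fastforce
  obtain g1 where "g1 \<in> Defs.dom (adjoint V S)" "Gm g1 = 0" "Gp g1 = Gp d"
    using boundary_surj by blast
  then show "Gp d = 0"
    using green K.inner_self_eq_zeroD by fastforce
  obtain g2 where "g2 \<in> Defs.dom (adjoint V S)" "Gm g2 = Gm d" "Gp g2 = 0"
    using boundary_surj by blast
  then show "Gm d = 0"
    using green K.inner_self_eq_zeroD by fastforce
qed

lemma boundary_dom_plus: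
  assumes "d \<in> Defs.dom S" "n \<in> Defs.dom (adjoint V S)"
  shows "Gm (d + n) = Gm n" "Gp (d + n) = Gp n"
proof -
  have "d \<in> Defs.dom (adjoint V S)"
    using assms(1) S_subset_adjoint unfolding mem_dom_iff by blast
  then show "Gm (d + n) = Gm n" "Gp (d + n) = Gp n"
    using boundary_add[OF _ assms(2)] boundary_vanish_on_dom[OF assms(1)] by simp_all
qed

lemma defect_boundary_relation:
  assumes "Im l > 0" "(n, smul V l n) \<in> adjoint V S"
  shows "C (Gp n) = Gm n"
proof -
  have "0 \<in> Defs.dom S"
    using graph_subspace_zero[OF graph_subspace_S] unfolding mem_dom_iff by blast
  then have "0 + n \<in> {u + v | u v. u \<in> Defs.dom S \<and> v \<in> defect_space V S l}"
    using assms(2) unfolding defect_space_def by blast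
  then show ?thesis
    using characteristic_constant[OF assms(1)] by auto
qed

lemma boundary_relation_decomposition:
  assumes "Im l > 0" "f \<in> Defs.dom (adjoint V S)" "C (Gp f) = Gm f"
  obtains d n where "d \<in> Defs.dom S" "(n, smul V l n) \<in> adjoint V S" "f = d + n"
proof -
  have "f \<in> {u + v | u v. u \<in> Defs.dom S \<and> v \<in> defect_space V S l}"
    using characteristic_constant[OF assms(1)] assms(2,3) by blast
  then show ?thesis
    using that unfolding defect_space_def by blast
qed

lemma defect_transfers_upper:
  assumes "Im l > 0" "Im l' > 0"
  shows "defect_transfers l l'"
  unfolding defect_transfers_def
proof (intro allI impI)
  fix k
  assume k: "(k, smul V l k) \<in> adjoint V S"
  then have "k \<in> Defs.dom (adjoint V S)"
    unfolding mem_dom_iff by blast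
  then show "\<exists>d k'. d \<in> Defs.dom S \<and> (k', smul V l' k') \<in> adjoint V S \<and> k = d + k'"
    using boundary_relation_decomposition[OF assms(2)] defect_boundary_relation[OF assms(1) k] by metis
qed

lemma defect_with_boundary_value:
  assumes "Im l > 0"
  obtains f where "(f, smul V l f) \<in> adjoint V S" "Gp f = a" "Gm f = C a"
proof -
  obtain f0 where f0: "f0 \<in> Defs.dom (adjoint V S)" "Gm f0 = C a" "Gp f0 = a"
    using boundary_surj by blast
  then obtain d n where d: "d \<in> Defs.dom S" and n: "(n, smul V l n) \<in> adjoint V S" and "f0 = d + n"
    using boundary_relation_decomposition[OF assms f0(1)] by metis
  moreover have "n \<in> Defs.dom (adjoint V S)"
    using n unfolding mem_dom_iff by blast
  ultimately show ?thesis
    using that[OF n] boundary_dom_plus[OF d] f0 by metis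
qed

lemma defect_sqnorm_boundary:
  assumes "(n, smul V l n) \<in> adjoint V S"
  shows "2 * Im l * sqnorm n = K.sqnorm (Gp n) - K.sqnorm (Gm n)"
proof -
  have "inner V (smul V l n) n - inner V n (smul V l n)
      = \<i> * (inner K (Gp n) (Gp n) - inner K (Gm n) (Gm n))"
    using green_identity[OF assms assms] .
  then have "(l - cnj l) * complex_of_real (sqnorm n)
      = \<i> * complex_of_real (K.sqnorm (Gp n) - K.sqnorm (Gm n))"
    by (simp add: inner_smul_left inner_smul_right inner_self K.inner_self algebra_simps)
  moreover have "l - cnj l = \<i> * complex_of_real (2 * Im l)"
    by (simp add: complex_eq_iff)
  ultimately show ?thesis
    by (simp add: complex_eq_iff)
qed

lemma exists_nonzero_defect_upper:
  assumes "Im l > 0"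
  obtains f where "(f, smul V l f) \<in> adjoint V S" "f \<noteq> 0"
proof -
  obtain e where e: "(e, smul V \<i> e) \<in> adjoint V S" "e \<noteq> 0"
    using defect_nonzero unfolding defect_space_def by blast
  have "defect_transfers \<i> l"
    using defect_transfers_upper assms by simp
  then obtain d f where d: "d \<in> Defs.dom S" and f: "(f, smul V l f) \<in> adjoint V S" and "e = d + f"
    using defect_transfersD e(1) by blast
  moreover have "f \<noteq> 0"
    using dom_inter_defect_trivial[of \<i> d] d e \<open>e = d + f\<close> by auto
  ultimately show ?thesis
    using that by blast
qed

lemma defect_component_sqnorm:
  assumes f: "(f, smul V l f) \<in> adjoint V S" and g: "(g, smul V l' g) \<in> adjoint V S"
    and d: "d \<in> Defs.dom S" and fdg: "f = d + g"
  shows "Im l * sqnorm f = Im l' * sqnorm g"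
proof -
  have "g \<in> Defs.dom (adjoint V S)"
    using g unfolding mem_dom_iff by blast
  then have "Gm f = Gm g" "Gp f = Gp g"
    using boundary_dom_plus[OF d] fdg by simp_all
  then show ?thesis
    using defect_sqnorm_boundary[OF f] defect_sqnorm_boundary[OF g] by simp
qed

lemma approx_eigenvector_real:
  assumes x: "Im x = 0" and \<epsilon>: "\<epsilon> > 0"
  obtains d w where "(d, w) \<in> S" "d \<noteq> 0" "sqnorm (w - smul V x d) = 2 * \<epsilon>\<^sup>2 * sqnorm d"
proof -
  define a where "a = \<i> * complex_of_real \<epsilon>"
  define l l' where "l = x + a" and "l' = x + 2 * a"
  have Im: "Im l = \<epsilon>" "Im l' = 2 * \<epsilon>"
    unfolding l_def l'_def a_def using x by simp_all
  obtain f where f: "(f, smul V l f) \<in> adjoint V S" "f \<noteq> 0"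
    using exists_nonzero_defect_upper[of l] Im \<epsilon> by auto
  have "defect_transfers l l'"
    using defect_transfers_upper Im \<epsilon> by simp
  then obtain d g where d: "d \<in> Defs.dom S" and g: "(g, smul V l' g) \<in> adjoint V S" and fdg: "f = d + g"
    using defect_transfersD f(1) by blast
  have "\<epsilon> * sqnorm f = \<epsilon> * (2 * sqnorm g)"
    using defect_component_sqnorm[OF f(1) g d fdg] unfolding Im by linarith
  then have "sqnorm (d - g) = 2 * sqnorm d"
    using \<epsilon> unfolding fdg by (simp add: sqnorm_add sqnorm_diff)
  obtain w where dw: "(d, w) \<in> S"
    using d unfolding mem_dom_iff by blast
  have "w = smul V l f - smul V l' g"
    by (rule S_on_difference_of_defects[OF dw f(1) g fdg])
  moreover have "smul V l f = smul V x d + smul V x g + (smul V a d + smul V a g)"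
    unfolding l_def fdg by (simp add: smul_add_left smul_add_right)
  moreover have "smul V l' g = smul V x g + (smul V a g + smul V a g)"
    unfolding l'_def using smul_add_left[of a a g] by (metis smul_add_left mult_2)
  ultimately have "w - smul V x d = smul V a (d - g)"
    by (simp add: smul_diff_right algebra_simps)
  then have "sqnorm (w - smul V x d) = 2 * \<epsilon>\<^sup>2 * sqnorm d"
    using \<open>sqnorm (d - g) = 2 * sqnorm d\<close> \<epsilon> unfolding a_def by (simp add: sqnorm_smul norm_mult)
  moreover have "d \<noteq> 0"
  proof
    assume "d = 0"
    then have "(f, smul V l' f) \<in> adjoint V S"
      using g fdg by simp
    then have "l = l'"
      by (rule adjoint_eigenvalue_unique[OF f(1) _ f(2)])
    then show False
      unfolding l_def l'_def a_def using \<epsilon> by (simp add: complex_eq_iff)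
  qed
  ultimately show ?thesis
    using that dw by blast
qed

lemma real_not_resolvent:
  assumes SA: "S \<subseteq> A" and x: "Im x = 0"
  shows "x \<notin> resolvent_set V A"
proof
  assume "x \<in> resolvent_set V A"
  then obtain M where "M \<ge> 0" and M: "\<And>u y. (u, y + smul V x u) \<in> A \<Longrightarrow> cnorm V u \<le> M * cnorm V y"
    using resolvent_set_boundE by blast
  define \<epsilon> where "\<epsilon> = 1 / (2 * (M + 1))"
  have \<epsilon>: "\<epsilon> > 0" "M * \<epsilon> < 1 / 2"
    unfolding \<epsilon>_def using \<open>M \<ge> 0\<close> by (simp_all add: field_simps)
  obtain d w where dw: "(d, w) \<in> S" and "d \<noteq> 0" and dist: "sqnorm (w - smul V x d) = 2 * \<epsilon>\<^sup>2 * sqnorm d"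
    using approx_eigenvector_real[OF x \<epsilon>(1)] by blast
  have "(d, (w - smul V x d) + smul V x d) \<in> A"
    using dw SA by auto
  then have "cnorm V d \<le> M * cnorm V (w - smul V x d)"
    by (rule M)
  also have "cnorm V (w - smul V x d) = sqrt 2 * \<epsilon> * cnorm V d"
    using dist \<epsilon>(1) by (simp add: cnorm_eq_sqrt real_sqrt_mult)
  finally have "cnorm V d \<le> (M * \<epsilon> * sqrt 2) * cnorm V d"
    by (simp add: algebra_simps)
  moreover have "M * \<epsilon> * sqrt 2 < 1"
  proof -
    have "sqrt 2 \<le> 2"
      using real_sqrt_le_mono[of 2 4] by simp
    then have "M * \<epsilon> * sqrt 2 \<le> M * \<epsilon> * 2"
      using \<epsilon>(1) \<open>M \<ge> 0\<close> by (intro mult_left_mono) auto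
    then show ?thesis
      using \<epsilon>(2) by linarith
  qed
  moreover have "cnorm V d > 0"
    using \<open>d \<noteq> 0\<close> cnorm_nonneg[of d] cnorm_eq_zero_iff[of d] by linarith
  ultimately show False
    by (simp add: mult_le_cancel_right1)
qed

lemma defect_orthogonal:
  assumes \<mu>: "Im \<mu> < 0" and g: "(g, smul V \<mu> g) \<in> adjoint V S"
    and l: "Im l > 0" and h: "(h, smul V l h) \<in> adjoint V S" and ne: "\<mu> \<noteq> cnj l"
  shows "inner V g h = 0"
proof -
  \<comment> \<open>Green's identity for \<open>g\<close> against \<open>ker (S* - cnj \<mu>)\<close>, whose boundary values fill the graph of \<open>C\<close>\<close>
  have boundary: "inner K (Gp g) b = inner K (Gm g) (C b)" for b
  proof -
    obtain f where f: "(f, smul V (cnj \<mu>) f) \<in> adjoint V S" "Gp f = b" "Gm f = C b"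
      using defect_with_boundary_value[of "cnj \<mu>"] \<mu> by auto
    have "inner V (smul V \<mu> g) f - inner V g (smul V (cnj \<mu>) f) = 0"
      by (simp add: inner_smul_left inner_smul_right)
    then show ?thesis
      using green_identity[OF g f(1)] f by simp
  qed
  have "(\<mu> - cnj l) * inner V g h = \<i> * (inner K (Gp g) (Gp h) - inner K (Gm g) (C (Gp h)))"
    using green_identity[OF g h] defect_boundary_relation[OF l h]
    by (simp add: inner_smul_left inner_smul_right algebra_simps)
  then show ?thesis
    using boundary ne by simp
qed

lemma defect_transfers_lower:
  assumes \<mu>: "Im \<mu> < 0" and \<mu>': "Im \<mu>' < 0"
  shows "defect_transfers \<mu> \<mu>'"
  unfolding defect_transfers_def
proof (intro allI impI)
  fix g
  assume g: "(g, smul V \<mu> g) \<in> adjoint V S"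
  \<comment> \<open>in \<open>(\<mu> - \<mu>') g = (S - \<mu>') d + n\<close> the component \<open>n\<close> is orthogonal to \<open>g\<close>, hence \<open>n = 0\<close> and \<open>g - d \<in> ker (S* - \<mu>')\<close>\<close>
  obtain d w n where dw: "(d, w) \<in> S" and n: "(n, smul V (cnj \<mu>') n) \<in> adjoint V S"
    and z: "smul V (\<mu> - \<mu>') g = (w - smul V \<mu>' d) + n"
    using shifted_range_defect_decomposition[of \<mu>'] \<mu>' by (metis less_irrefl)
  have "(\<mu> - \<mu>') * inner V g n = 0"
    using defect_orthogonal[OF \<mu> g _ n] \<mu>' by (cases "\<mu> = \<mu>'") simp_all
  moreover have "inner V (smul V (\<mu> - \<mu>') g) n = inner V n n"
    using inner_shifted_range_defect[OF dw n] by (simp add: z inner_add_left)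
  ultimately have "inner V n n = 0"
    by (metis inner_smul_left)
  then have "n = 0"
    by (rule inner_self_eq_zeroD)
  have "(g - d, smul V \<mu> g - w) \<in> adjoint V S"
    using graph_subspace_diff[OF graph_subspace_adjoint g] dw S_subset_adjoint by blast
  moreover have "smul V \<mu> g - w = smul V \<mu>' (g - d)"
    using z \<open>n = 0\<close> by (simp add: smul_diff_left smul_diff_right algebra_simps)
  moreover have "d \<in> Defs.dom S"
    using dw unfolding mem_dom_iff by blast
  ultimately show "\<exists>d g'. d \<in> Defs.dom S \<and> (g', smul V \<mu>' g') \<in> adjoint V S \<and> g = d + g'"
    by (intro exI[of _ d] exI[of _ "g - d"]) simp
qed

end

lemma complement_of_halfplanes_cases:
  assumes R: "\<And>z. z \<in> R \<longleftrightarrow> Im z > 0 \<and> P \<or> Im z < 0 \<and> Q"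
  shows "UNIV - R = {z. Im z = 0} \<or> UNIV - R = {z. Im z \<le> 0} \<or> UNIV - R = {z. Im z \<ge> 0} \<or> UNIV - R = UNIV"
proof (cases P; cases Q)
  assume "P" "Q"
  then have "UNIV - R = {z. Im z = 0}"
    by (auto simp: set_eq_iff R)
  then show ?thesis by simp
next
  assume "P" "\<not> Q"
  then have "UNIV - R = {z. Im z \<le> 0}"
    by (auto simp: set_eq_iff R)
  then show ?thesis by simp
next
  assume "\<not> P" "Q"
  then have "UNIV - R = {z. Im z \<ge> 0}"
    by (auto simp: set_eq_iff R)
  then show ?thesis by simp
next
  assume "\<not> P" "\<not> Q"
  then have "UNIV - R = UNIV"
    by (auto simp: set_eq_iff R)
  then show ?thesis by simp
qed

locale phillips_extension = phillips V S K Gm Gp C + proper_extension V S A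
  for V :: "('a::ab_group_add) cip" and S K Gm Gp C A

begin

lemma resolvent_set_iff:
  "z \<in> resolvent_set V A \<longleftrightarrow>
     Im z > 0 \<and> (\<exists>l. Im l > 0 \<and> l \<in> resolvent_set V A) \<or>
     Im z < 0 \<and> (\<exists>l. Im l < 0 \<and> l \<in> resolvent_set V A)"
proof
  assume z: "z \<in> resolvent_set V A"
  then have "Im z \<noteq> 0"
    using real_not_resolvent[OF S_subset_A] by blast
  then consider "Im z > 0" | "Im z < 0"
    by linarith
  then show "Im z > 0 \<and> (\<exists>l. Im l > 0 \<and> l \<in> resolvent_set V A) \<or>
      Im z < 0 \<and> (\<exists>l. Im l < 0 \<and> l \<in> resolvent_set V A)"
    using z by cases blast+
next
  assume "Im z > 0 \<and> (\<exists>l. Im l > 0 \<and> l \<in> resolvent_set V A) \<or>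
      Im z < 0 \<and> (\<exists>l. Im l < 0 \<and> l \<in> resolvent_set V A)"
  then show "z \<in> resolvent_set V A"
  proof (elim disjE conjE exE)
    fix l
    assume "Im z > 0" "Im l > 0" "l \<in> resolvent_set V A"
    then show ?thesis
      using resolvent_transfer[of l z] defect_transfers_upper by simp
  next
    fix l
    assume "Im z < 0" "Im l < 0" "l \<in> resolvent_set V A"
    then show ?thesis
      using resolvent_transfer[of l z] defect_transfers_lower by simp
  qed
qed

lemma spectrum_cases:
  "spectrum V A = {z. Im z = 0}
     \<or> spectrum V A = {z. Im z \<le> 0} \<or> spectrum V A = {z. Im z \<ge> 0}
     \<or> spectrum V A = UNIV"
  unfolding spectrum_def by (rule complement_of_halfplanes_cases[OF resolvent_set_iff])

end

lemma phillips_symmetricE: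
  assumes V: "hilbert_space V" and S: "phillips_symmetric TYPE('k) V S"
  obtains K :: "('k::ab_group_add) cip" and Gm Gp C where "phillips V S K Gm Gp C"
proof -
  interpret hilbert V
    using V by unfold_locales
  obtain K :: "'k cip" and Gm Gp Th C where triplet: "boundary_triplet V S K Gm Gp"
    and char: "characteristic_function V S K Gm Gp Th" and const: "\<forall>l. Im l > 0 \<longrightarrow> Th l = C"
    using S unfolding phillips_symmetric_def by blast
  obtain Ep where "orthonormal_basis_of V (defect_space V S \<i>) Ep" "Ep \<noteq> {}"
    using S unfolding phillips_symmetric_def equal_nonzero_defects_def by blast
  then obtain e where "e \<in> defect_space V S \<i>" "e \<noteq> 0"
    by (rule orthonormal_basis_nonzero)
  moreover have "{u + v | u v. u \<in> Defs.dom S \<and> v \<in> defect_space V S l}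
      = {f \<in> Defs.dom (adjoint V S). C (Gp f) = Gm f}" if "Im l > 0" for l
    using char const that unfolding characteristic_function_def by auto
  ultimately have "phillips V S K Gm Gp C"
    using V S triplet unfolding phillips_symmetric_def
    by unfold_locales blast+
  then show ?thesis
    by (rule that)
qed

theorem proposition4p1:
  fixes V :: "('a::ab_group_add) cip" and S A :: "('a \<times> 'a) set"
  assumes "hilbert_space V" and "separable_space V"
    and "phillips_symmetric TYPE('k::ab_group_add) V S"
    and "is_operator V A" and "S \<subseteq> A" and "A \<subseteq> adjoint V S"
  shows "spectrum V A = {z. Im z = 0}
       \<or> spectrum V A = {z. Im z \<le> 0} \<or> spectrum V A = {z. Im z \<ge> 0}
       \<or> spectrum V A = UNIV"
proof -
  obtain K :: "'k cip" and Gm Gp C where "phillips V S K Gm Gp C"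
    using phillips_symmetricE[OF assms(1,3)] by blast
  then interpret phillips_extension V S K Gm Gp C A
    using assms(4-6) phillips.axioms(1)
    by (simp add: phillips_extension_def proper_extension_def proper_extension_axioms_def)
  show ?thesis
    by (rule spectrum_cases)
qed

end
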